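(* Let $K$ be a field, $A\subset K$ a finite set with $|A|=m$, $0\le p\le m$, and $X=\{x_1,\dots,x_r\}$ a set of indeterminates with $r\le m-p$. Let $B\subset K$ be any finite set with $|B|\ge p$. Then in $K[X]$, $$\sum_{A'\subset A,\ |A'|=p}\mathcal{R}(A\setminus A',B)\frac{\mathcal{R}(X,A')}{\mathcal{R}(A\setminus A',A')}=\sum_{B'\subset B,\ |B'|=p}\mathcal{R}(A,B\setminus B')\frac{\mathcal{R}(X,B')}{\mathcal{R}(B',B\setminus B')}.$$
   Context: For finite sets $Y,Z$ of elements or indeterminates, $\mathcal{R}(Y,Z):=\prod_{y\in Y,z\in Z}(y-z)$, with $\mathcal{R}(Y,Z)=1$ if $Y$ or $Z$ is empty (in particular when $r=0$). *)

theory Defs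
  imports Main "HOL-Library.Poly_Mapping"
begin

definition Res :: "'a::comm_ring_1 set \<Rightarrow> 'a set \<Rightarrow> 'a" where
  "Res Y Z = (\<Prod>y\<in>Y. \<Prod>z\<in>Z. (y - z))"

text \<open>Multivariate polynomial ring K[x_0, x_1, ...]: monomials are finitely supported
  exponent maps nat => nat, polynomials are finitely supported coefficient maps.\<close>
type_synonym 'k mpoly = "(nat \<Rightarrow>\<^sub>0 nat) \<Rightarrow>\<^sub>0 'k"

definition mconst :: "'k::comm_ring_1 \<Rightarrow> 'k mpoly" where
  "mconst c = Poly_Mapping.single 0 c"

definition mvar :: "nat \<Rightarrow> 'k::comm_ring_1 mpoly" where
  "mvar i = Poly_Mapping.single (Poly_Mapping.single i 1) 1"

end

theory Submission
  imports Defs "HOL-Computational_Algebra.Polynomial" "HOL-Library.FuncSet"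
begin

text \<open>
  Write P_S(t) for the product of (t - s) over s in S, and e_j(S) for its coefficients.
  Expanding each factor R(x_i, S) = P_S(x_i) = \<Sum>_j e_j(S) x_i^j reduces the theorem to the
  scalar identity in which R(X, S) is replaced by a product e_j1(S) \<cdots> e_jr(S) of
  r \<le> |A| - p coefficients. That identity is proved by induction on |A| + |B|: weighting the
  summands by P_S(t) turns the difference of the two sides into a polynomial of degree at most p
  whose value at a \<in> A is P_B(a) times the same difference for A - {a}. So for p < |A| it
  vanishes identically, and its coefficient of t^j gives the identity with one more factor e_j.
  When p = |A| < |B|, exchanging A and B multiplies both sides by the same sign
  (-1)^((|A| + p)(|B| + p)), and the argument applies with the roles of A and B reversed.
\<close>

definition root_poly :: "'a::comm_ring_1 set \<Rightarrow> 'a poly" where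
  "root_poly S = (\<Prod>s\<in>S. [:- s, 1:])"

definition coeff_prod :: "nat list \<Rightarrow> 'a::comm_ring_1 set \<Rightarrow> 'a" where
  "coeff_prod js S = (\<Prod>j\<leftarrow>js. coeff (root_poly S) j)"

definition subsets_sum :: "('a set \<Rightarrow> 'b::comm_semiring_1) \<Rightarrow> 'a set \<Rightarrow> nat \<Rightarrow> ('a set \<Rightarrow> 'b) \<Rightarrow> 'b" where
  "subsets_sum w X p f = (\<Sum>S\<in>{S. S \<subseteq> X \<and> card S = p}. w S * f S)"

definition root_poly_sum :: "('a set \<Rightarrow> 'a) \<Rightarrow> 'a set \<Rightarrow> nat \<Rightarrow> ('a set \<Rightarrow> 'a) \<Rightarrow> 'a::comm_ring_1 poly" where
  "root_poly_sum w X p f = (\<Sum>S\<in>{S. S \<subseteq> X \<and> card S = p}. smult (w S * f S) (root_poly S))"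

definition left_coeff :: "'a::field set \<Rightarrow> 'a set \<Rightarrow> 'a set \<Rightarrow> 'a" where
  "left_coeff A B A' = Res (A - A') B / Res (A - A') A'"

definition right_coeff :: "'a::field set \<Rightarrow> 'a set \<Rightarrow> 'a set \<Rightarrow> 'a" where
  "right_coeff A B B' = Res A (B - B') / Res B' (B - B')"

definition resultant_identity :: "'a::field set \<Rightarrow> 'a set \<Rightarrow> nat \<Rightarrow> ('a set \<Rightarrow> 'a) \<Rightarrow> bool" where
  "resultant_identity A B p f \<longleftrightarrow>
     subsets_sum (left_coeff A B) A p f = subsets_sum (right_coeff A B) B p f"

lemma poly_root_poly: "poly (root_poly S) x = (\<Prod>s\<in>S. x - s)"
  by (simp add: root_poly_def poly_prod)

lemma degree_root_poly: "finite S \<Longrightarrow> degree (root_poly (S :: 'a::idom set)) = card S"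
  unfolding root_poly_def by (subst degree_prod_eq_sum_degree) auto

lemma coeff_root_poly_card: "finite S \<Longrightarrow> coeff (root_poly (S :: 'a::idom set)) (card S) = 1"
  using lead_coeff_prod[of "\<lambda>s. [:- s, 1:]" S] degree_root_poly[of S]
  by (simp add: root_poly_def)

lemma poly_root_poly_eq_0_iff: "finite S \<Longrightarrow> poly (root_poly S) x = (0 :: 'a::idom) \<longleftrightarrow> x \<in> S"
  by (simp add: poly_root_poly)

lemma Res_insert_left:
  "finite Y \<Longrightarrow> y \<notin> Y \<Longrightarrow> Res (insert y Y) Z = poly (root_poly Z) y * Res Y Z"
  by (simp add: Res_def poly_root_poly)

lemma Res_swap:
  assumes "finite Y" "finite Z"
  shows "Res Y Z = (-1) ^ (card Y * card Z) * Res Z (Y :: 'a::comm_ring_1 set)"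
proof -
  have row: "(\<Prod>z\<in>Z. y - z) = (-1) ^ card Z * (\<Prod>z\<in>Z. z - y)" for y :: 'a
    by (simp flip: prod_constant prod.distrib)
  have "Res Y Z = (\<Prod>y\<in>Y. (-1) ^ card Z * (\<Prod>z\<in>Z. z - y))"
    by (simp add: Res_def row)
  also have "\<dots> = (-1) ^ (card Y * card Z) * (\<Prod>y\<in>Y. \<Prod>z\<in>Z. z - y)"
    by (simp add: prod.distrib flip: power_mult) (simp add: mult.commute)
  also have "(\<Prod>y\<in>Y. \<Prod>z\<in>Z. z - y) = Res Z Y"
    unfolding Res_def by (rule prod.swap)
  finally show ?thesis .
qed

lemma coeff_root_poly_sum:
  "coeff (root_poly_sum w X p f) j = subsets_sum w X p (\<lambda>S. coeff (root_poly S) j * f S)"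
  by (simp add: root_poly_sum_def subsets_sum_def coeff_sum mult_ac)

lemma poly_root_poly_sum:
  "poly (root_poly_sum w X p f) x = subsets_sum w X p (\<lambda>S. poly (root_poly S) x * f S)"
  by (simp add: root_poly_sum_def subsets_sum_def poly_sum mult_ac)

lemma degree_root_poly_sum:
  "finite X \<Longrightarrow> degree (root_poly_sum w X p f :: 'a::idom poly) \<le> p"
  unfolding root_poly_sum_def
  by (intro degree_sum_le degree_smult_le[THEN order_trans])
     (auto simp: finite_Collect_subsets degree_root_poly dest: finite_subset)

lemma subsets_sum_coeff_root_poly_card:
  "finite X \<Longrightarrow> subsets_sum w X p (\<lambda>S. coeff (root_poly S) p * f S) = subsets_sum w X p (f :: 'a::idom set \<Rightarrow> 'a)"
  unfolding subsets_sum_def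
  by (rule sum.cong) (auto simp: coeff_root_poly_card[OF finite_subset])

subsection \<open>Removing a point of \<open>A\<close>\<close>

lemma left_coeff_remove:
  assumes "finite A" "a \<in> A" "A' \<subseteq> A - {a}" "finite B"
  shows "left_coeff A B A' * poly (root_poly A') a = poly (root_poly B) a * left_coeff (A - {a}) B A'"
proof -
  define C where "C = A - {a} - A'"
  have "finite A'" "finite C" "a \<notin> C" "A - A' = insert a C"
    using assms finite_subset by (auto simp: C_def)
  then have "left_coeff A B A' = poly (root_poly B) a * Res C B / (poly (root_poly A') a * Res C A')"
    by (simp add: left_coeff_def Res_insert_left)
  moreover have "poly (root_poly A') a \<noteq> 0"
    using assms \<open>finite A'\<close> by (auto simp: poly_root_poly_eq_0_iff)
  moreover have "left_coeff (A - {a}) B A' = Res C B / Res C A'"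
    by (simp add: left_coeff_def C_def)
  ultimately show ?thesis
    by simp
qed

lemma right_coeff_remove:
  assumes "finite A" "a \<in> A" "B' \<subseteq> B" "finite B"
  shows "right_coeff A B B' * poly (root_poly B') a = poly (root_poly B) a * right_coeff (A - {a}) B B'"
proof -
  have "Res A (B - B') = poly (root_poly (B - B')) a * Res (A - {a}) (B - B')"
    using Res_insert_left[of "A - {a}" a "B - B'"] assms by (simp add: insert_absorb)
  moreover have "poly (root_poly B) a = poly (root_poly (B - B')) a * poly (root_poly B') a"
    unfolding poly_root_poly using prod.subset_diff[OF assms(3,4)] by simp
  ultimately show ?thesis
    by (simp add: right_coeff_def field_simps)
qed

lemma subsets_sum_left_coeff_eval:
  assumes "finite A" "a \<in> A" "finite B"
  shows "subsets_sum (left_coeff A B) A p (\<lambda>S. poly (root_poly S) a * f S)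
       = poly (root_poly B) a * subsets_sum (left_coeff (A - {a}) B) (A - {a}) p f"
proof -
  have "subsets_sum (left_coeff A B) A p (\<lambda>S. poly (root_poly S) a * f S)
      = (\<Sum>S\<in>{S. S \<subseteq> A - {a} \<and> card S = p}. left_coeff A B S * (poly (root_poly S) a * f S))"
    unfolding subsets_sum_def
    by (rule sum.mono_neutral_right)
       (use assms in \<open>auto simp: finite_Collect_subsets poly_root_poly_eq_0_iff dest: finite_subset\<close>)
  also have "\<dots> = poly (root_poly B) a * subsets_sum (left_coeff (A - {a}) B) (A - {a}) p f"
    unfolding subsets_sum_def sum_distrib_left
    by (rule sum.cong) (use left_coeff_remove[OF assms(1,2) _ assms(3)] in \<open>auto simp: mult_ac\<close>)
  finally show ?thesis .
qed

lemma subsets_sum_right_coeff_eval: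
  assumes "finite A" "a \<in> A" "finite B"
  shows "subsets_sum (right_coeff A B) B p (\<lambda>S. poly (root_poly S) a * f S)
       = poly (root_poly B) a * subsets_sum (right_coeff (A - {a}) B) B p f"
  unfolding subsets_sum_def sum_distrib_left
  by (rule sum.cong) (use right_coeff_remove[OF assms(1,2) _ assms(3)] in \<open>auto simp: mult_ac\<close>)

lemma resultant_identity_coeff_mult:
  assumes "finite A" "finite B" "p < card A"
    and removals: "\<And>a. a \<in> A \<Longrightarrow> resultant_identity (A - {a}) B p f"
  shows "resultant_identity A B p (\<lambda>S. coeff (root_poly S) j * f S)"
proof -
  have "root_poly_sum (left_coeff A B) A p f = root_poly_sum (right_coeff A B) B p f"
  proof (rule poly_eqI_degree)
    fix a assume a: "a \<in> A"
    have "poly (root_poly_sum (left_coeff A B) A p f) a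
        = poly (root_poly B) a * subsets_sum (left_coeff (A - {a}) B) (A - {a}) p f"
      by (simp only: poly_root_poly_sum subsets_sum_left_coeff_eval[OF assms(1) a assms(2)])
    also have "\<dots> = poly (root_poly B) a * subsets_sum (right_coeff (A - {a}) B) B p f"
      using removals[OF a] by (simp add: resultant_identity_def)
    also have "\<dots> = poly (root_poly_sum (right_coeff A B) B p f) a"
      by (simp only: poly_root_poly_sum subsets_sum_right_coeff_eval[OF assms(1) a assms(2)])
    finally show "poly (root_poly_sum (left_coeff A B) A p f) a = poly (root_poly_sum (right_coeff A B) B p f) a" .
  next
    show "degree (root_poly_sum (left_coeff A B) A p f) < card A"
      using degree_root_poly_sum[OF assms(1)] assms(3) by (rule le_less_trans)
    show "degree (root_poly_sum (right_coeff A B) B p f) < card A"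
      using degree_root_poly_sum[OF assms(2)] assms(3) by (rule le_less_trans)
  qed
  then have "coeff (root_poly_sum (left_coeff A B) A p f) j = coeff (root_poly_sum (right_coeff A B) B p f) j"
    by simp
  then show ?thesis
    by (simp only: resultant_identity_def coeff_root_poly_sum)
qed

subsection \<open>Symmetry in \<open>A\<close> and \<open>B\<close>\<close>

lemma left_coeff_eq_right_coeff_swap:
  assumes "finite A" "finite B" "S \<subseteq> A" "card S = p"
  shows "left_coeff A B S = (-1) ^ ((card A + p) * (card B + p)) * right_coeff B A S"
proof -
  define c where "c = card (A - S)"
  have "finite S" "finite (A - S)"
    using assms finite_subset by auto
  then have "card A = c + p"
    using card_Diff_subset[OF \<open>finite S\<close> assms(3)] card_mono[OF assms(1,3)] assms(4)
    by (simp add: c_def)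
  have "left_coeff A B S = (-1) ^ (c * card B) * Res B (A - S) / ((-1) ^ (c * p) * Res S (A - S))"
    unfolding left_coeff_def c_def
    using Res_swap[OF \<open>finite (A - S)\<close> assms(2)] Res_swap[OF \<open>finite (A - S)\<close> \<open>finite S\<close>] assms(4)
    by (simp only:)
  also have "\<dots> = ((-1) ^ (c * card B) / (-1) ^ (c * p)) * right_coeff B A S"
    by (simp only: right_coeff_def times_divide_times_eq)
  also have "(-1) ^ (c * card B) / (-1) ^ (c * p) = ((-1) ^ ((card A + p) * (card B + p)) :: 'a)"
    unfolding \<open>card A = c + p\<close> by (simp add: minus_one_power_iff even_mult_iff)
  finally show ?thesis .
qed

lemma resultant_identity_swap:
  assumes "finite A" "finite B"
  shows "resultant_identity A B p f \<longleftrightarrow> resultant_identity B A p f"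
proof -
  define \<sigma> :: 'a where "\<sigma> = (-1) ^ ((card A + p) * (card B + p))"
  have "subsets_sum (left_coeff A B) A p f = \<sigma> * subsets_sum (right_coeff B A) A p f"
    unfolding subsets_sum_def sum_distrib_left
    by (rule sum.cong[OF refl]) (clarsimp simp: left_coeff_eq_right_coeff_swap[OF assms] \<sigma>_def)
  moreover have "subsets_sum (left_coeff B A) B p f = \<sigma> * subsets_sum (right_coeff A B) B p f"
    unfolding subsets_sum_def sum_distrib_left
    by (rule sum.cong[OF refl])
       (clarsimp simp: left_coeff_eq_right_coeff_swap[OF assms(2,1)] \<sigma>_def mult.commute[of "card A + p"])
  moreover have "\<sigma> * x = y \<longleftrightarrow> \<sigma> * y = x" for x y
    by (auto simp: \<sigma>_def mult.assoc[symmetric])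
  ultimately show ?thesis
    unfolding resultant_identity_def by simp
qed

lemma coeff_prod_Nil: "coeff_prod [] = (\<lambda>S. 1)"
  by (simp add: coeff_prod_def fun_eq_iff)

lemma coeff_prod_Cons: "coeff_prod (j # js) = (\<lambda>S. coeff (root_poly S) j * coeff_prod js S)"
  by (simp add: coeff_prod_def fun_eq_iff)

lemma coeff_prod_map_upt: "coeff_prod (map g [0..<r]) S = (\<Prod>i<r. coeff (root_poly S) (g i))"
  by (simp add: coeff_prod_def lessThan_atLeast0 prod.distinct_set_conv_list[of "[0..<r]", simplified] comp_def)

lemma resultant_identity_top_coeff:
  assumes "finite A" "finite B"
  shows "resultant_identity A B p (\<lambda>S. coeff (root_poly S) p * f S) \<longleftrightarrow> resultant_identity A B p f"
  using assms by (simp add: resultant_identity_def subsets_sum_coeff_root_poly_card)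

lemma resultant_identity_equal_cards:
  assumes "finite A" "finite B" "card A = p" "card B = p"
  shows "resultant_identity A B p (\<lambda>S. c)"
proof -
  have "{S. S \<subseteq> A \<and> card S = p} = {A}" "{S. S \<subseteq> B \<and> card S = p} = {B}"
    using assms card_subset_eq[of A] card_subset_eq[of B] by auto
  then show ?thesis
    by (simp add: resultant_identity_def subsets_sum_def left_coeff_def right_coeff_def Res_def)
qed

theorem resultant_identity_coeff_prod:
  assumes "finite A" "finite B" "p \<le> card A" "p \<le> card B" "length js \<le> card A - p"
  shows "resultant_identity A B p (coeff_prod js)"
  using assms
proof (induction "card A + card B" arbitrary: A B js rule: less_induct)
  case less
  have removals: "resultant_identity (X - {x}) Y p (coeff_prod js')"
    if "x \<in> X" "card X + card Y = card A + card B" "finite X" "finite Y"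
      "p \<le> card Y" "length js' < card X - p" for X Y :: "'a set" and x js'
  proof (rule less.hyps)
    have "card (X - {x}) = card X - 1"
      using that by (simp add: card_Diff_singleton)
    then show "card (X - {x}) + card Y < card A + card B" "finite (X - {x})" "finite Y"
      "p \<le> card (X - {x})" "p \<le> card Y" "length js' \<le> card (X - {x}) - p"
      using that by auto
  qed
  show ?case
  proof (cases js)
    case (Cons j js')
    then have "p < card A" "length js' < card A - p"
      using less.prems by auto
    then show ?thesis
      unfolding Cons coeff_prod_Cons
      using less.prems removals[of _ A B js'] by (intro resultant_identity_coeff_mult) auto
  next
    case Nil
    consider "p < card A" | "p < card B" | "card A = p" "card B = p"
      using less.prems by linarith
    then show ?thesis
    proof cases
      case 1
      then have "resultant_identity A B p (\<lambda>S. coeff (root_poly S) p * coeff_prod [] S)"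
        using less.prems removals[of _ A B "[]"] by (intro resultant_identity_coeff_mult) auto
      then show ?thesis
        unfolding Nil resultant_identity_top_coeff[OF less.prems(1,2)] .
    next
      case 2
      then have "resultant_identity B A p (\<lambda>S. coeff (root_poly S) p * coeff_prod [] S)"
        using less.prems removals[of _ B A "[]"] by (intro resultant_identity_coeff_mult) auto
      then show ?thesis
        unfolding Nil resultant_identity_top_coeff[OF less.prems(2,1)]
        using resultant_identity_swap[OF less.prems(1,2)] by simp
    next
      case 3
      then show ?thesis
        unfolding Nil coeff_prod_Nil using less.prems by (intro resultant_identity_equal_cards)
    qed
  qed
qed

subsection \<open>Expansion in the polynomial ring\<close>

lemma mconst_0 [simp]: "mconst 0 = 0"
  by (simp add: mconst_def)

lemma mconst_1 [simp]: "mconst 1 = 1"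
  by (simp add: mconst_def)

lemma mconst_add: "mconst (a + b) = mconst a + mconst b"
  by (simp add: mconst_def single_add)

lemma mconst_diff: "mconst (a - b) = mconst a - mconst b"
  by (simp add: mconst_def single_diff)

lemma mconst_mult: "mconst (a * b) = mconst a * mconst b"
  by (simp add: mconst_def mult_single)

lemma inj_mconst: "inj mconst"
  unfolding mconst_def by (rule inj_single)

lemma mconst_eq_0_iff: "mconst a = 0 \<longleftrightarrow> a = 0"
  using injD[OF inj_mconst, of a 0] by auto

lemma inj_mvar: "inj (mvar :: nat \<Rightarrow> 'k::comm_ring_1 mpoly)"
  unfolding mvar_def inj_def
  by (metis lookup_single_eq lookup_single_not_eq zero_neq_one)

lemma mconst_sum: "mconst (\<Sum>x\<in>X. f x) = (\<Sum>x\<in>X. mconst (f x))"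
  by (induction X rule: infinite_finite_induct) (auto simp: mconst_add)

lemma mconst_prod: "mconst (\<Prod>x\<in>X. f x) = (\<Prod>x\<in>X. mconst (f x))"
  by (induction X rule: infinite_finite_induct) (auto simp: mconst_mult)

lemma map_poly_mconst_root_poly:
  "finite S \<Longrightarrow> map_poly mconst (root_poly S) = (\<Prod>a\<in>S. [:- mconst a, 1:])"
proof (induction S rule: finite_induct)
  case empty
  then show ?case by (simp add: root_poly_def)
next
  case (insert a S)
  have "map_poly mconst ([:- a, 1:] * root_poly S) = [:- mconst a, 1:] * map_poly mconst (root_poly S)"
    by (rule poly_eqI)
       (simp add: coeff_map_poly mult_pCons_left coeff_pCons mconst_add mconst_diff mconst_mult
         split: nat.split)
  with insert show ?case
    by (simp add: root_poly_def)
qed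

lemma prod_minus_mconst:
  fixes S :: "'k::idom set"
  assumes "finite S"
  shows "(\<Prod>a\<in>S. x - mconst a) = (\<Sum>j\<le>card S. mconst (coeff (root_poly S) j) * x ^ j)"
proof -
  have "(\<Prod>a\<in>S. x - mconst a) = poly (map_poly mconst (root_poly S)) x"
    using assms by (simp add: map_poly_mconst_root_poly poly_prod)
  also have "\<dots> = (\<Sum>j\<le>card S. mconst (coeff (root_poly S) j) * x ^ j)"
    using assms by (simp add: poly_altdef degree_map_poly mconst_eq_0_iff coeff_map_poly degree_root_poly)
  finally show ?thesis .
qed

lemma Res_mvars_mconsts:
  fixes S :: "'k::idom set"
  assumes "finite S"
  shows "Res (mvar ` {..<r}) (mconst ` S)
       = (\<Sum>g\<in>{..<r} \<rightarrow>\<^sub>E {..card S}. mconst (coeff_prod (map g [0..<r]) S) * (\<Prod>i<r. mvar i ^ g i))"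
proof -
  have "Res (mvar ` {..<r}) (mconst ` S) = (\<Prod>i<r. \<Prod>a\<in>S. mvar i - mconst a)"
    by (simp add: Res_def prod.reindex inj_on_subset[OF inj_mvar] inj_on_subset[OF inj_mconst])
  also have "\<dots> = (\<Prod>i<r. \<Sum>j\<le>card S. mconst (coeff (root_poly S) j) * mvar i ^ j)"
    using assms by (simp add: prod_minus_mconst)
  also have "\<dots> = (\<Sum>g\<in>{..<r} \<rightarrow>\<^sub>E {..card S}. \<Prod>i<r. mconst (coeff (root_poly S) (g i)) * mvar i ^ g i)"
    by (rule prod_sum_PiE) auto
  also have "\<dots> = (\<Sum>g\<in>{..<r} \<rightarrow>\<^sub>E {..card S}. mconst (coeff_prod (map g [0..<r]) S) * (\<Prod>i<r. mvar i ^ g i))"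
    by (simp add: prod.distrib mconst_prod coeff_prod_map_upt)
  finally show ?thesis .
qed

lemma sum_subsets_Res_mvars:
  fixes X :: "'k::idom set"
  assumes "finite X"
  shows "(\<Sum>S\<in>{S. S \<subseteq> X \<and> card S = p}. mconst (w S) * Res (mvar ` {..<r}) (mconst ` S))
       = (\<Sum>g\<in>{..<r} \<rightarrow>\<^sub>E {..p}.
            mconst (subsets_sum w X p (coeff_prod (map g [0..<r]))) * (\<Prod>i<r. mvar i ^ g i))"
proof -
  have "(\<Sum>S\<in>{S. S \<subseteq> X \<and> card S = p}. mconst (w S) * Res (mvar ` {..<r}) (mconst ` S))
      = (\<Sum>S\<in>{S. S \<subseteq> X \<and> card S = p}. \<Sum>g\<in>{..<r} \<rightarrow>\<^sub>E {..p}.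
            mconst (w S * coeff_prod (map g [0..<r]) S) * (\<Prod>i<r. mvar i ^ g i))"
    by (rule sum.cong[OF refl])
       (auto simp: Res_mvars_mconsts sum_distrib_left mconst_mult mult.assoc dest: finite_subset[OF _ assms])
  also have "\<dots> = (\<Sum>g\<in>{..<r} \<rightarrow>\<^sub>E {..p}.
            mconst (subsets_sum w X p (coeff_prod (map g [0..<r]))) * (\<Prod>i<r. mvar i ^ g i))"
    by (subst sum.swap) (simp add: subsets_sum_def mconst_sum sum_distrib_right)
  finally show ?thesis .
qed

theorem corollary3p2:
  fixes A B :: "'k::field set" and p r :: nat
  assumes "finite A" and "p \<le> card A" and "r \<le> card A - p"
    and "finite B" and "card B \<ge> p"
  shows "(\<Sum>A'\<in>{A'. A' \<subseteq> A \<and> card A' = p}.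
            mconst (Res (A - A') B / Res (A - A') A')
            * Res (mvar ` {..<r} :: 'k mpoly set) (mconst ` A'))
       = (\<Sum>B'\<in>{B'. B' \<subseteq> B \<and> card B' = p}.
            mconst (Res A (B - B') / Res B' (B - B'))
            * Res (mvar ` {..<r} :: 'k mpoly set) (mconst ` B'))"
proof -
  have identity: "resultant_identity A B p (coeff_prod (map g [0..<r]))" for g
    by (rule resultant_identity_coeff_prod) (use assms in auto)
  show ?thesis
    using sum_subsets_Res_mvars[OF assms(1), where w = "left_coeff A B"]
      sum_subsets_Res_mvars[OF assms(4), where w = "right_coeff A B"] identity
    by (simp add: left_coeff_def right_coeff_def resultant_identity_def)
qed

end
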